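(* Let $W,E_0,E\in\mathcal G$ with $W$ adjacent to $E_0$, $E$ distant from $E_0$, and $W$ not distant from $E$. Then $W\cap E$ is a point (i.e. $\dim(W\cap E)=1$).
   Context: $K$ is a (not necessarily commutative) field and $V$ is a left vector space over $K$ of arbitrary (possibly infinite) dimension with $\dim V>2$. $\mathcal G:=\{X\le V\mid X\cong V/X\}$, assumed nonempty. Points are $1$-dimensional subspaces. $X,Y\in\mathcal G$ are adjacent if $\dim((X+Y)/X)=\dim((X+Y)/Y)=1$ (equivalently $\dim(X/(X\cap Y))=\dim(Y/(X\cap Y))=1$), and distant if $V=X\oplus Y$. *)

theory Defs
  imports Main
begin

(* Left vector space over a (not necessarily commutative) field K, i.e. a
   division ring.  The carrier of V is the whole type 'v; smul is left scalar
   multiplication. *)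
definition left_vector_space :: "('k::division_ring \<Rightarrow> 'v::ab_group_add \<Rightarrow> 'v) \<Rightarrow> bool" where
  "left_vector_space smul \<longleftrightarrow>
     (\<forall>a x y. smul a (x + y) = smul a x + smul a y) \<and>
     (\<forall>a b x. smul (a + b) x = smul a x + smul b x) \<and>
     (\<forall>a b x. smul (a * b) x = smul a (smul b x)) \<and>
     (\<forall>x. smul 1 x = x)"

definition subspace :: "('k::division_ring \<Rightarrow> 'v::ab_group_add \<Rightarrow> 'v) \<Rightarrow> 'v set \<Rightarrow> bool" where
  "subspace smul X \<longleftrightarrow> 0 \<in> X \<and> (\<forall>x\<in>X. \<forall>y\<in>X. x + y \<in> X) \<and> (\<forall>a. \<forall>x\<in>X. smul a x \<in> X)"

definition dim_gt_2 :: "('k::division_ring \<Rightarrow> 'v::ab_group_add \<Rightarrow> 'v) \<Rightarrow> bool" where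
  "dim_gt_2 smul \<longleftrightarrow> (\<exists>u v w. \<forall>a b c. smul a u + smul b v + smul c w = 0 \<longrightarrow> a = 0 \<and> b = 0 \<and> c = 0)"

(* X \<cong> V/X: there is a K-linear bijection from X onto the quotient V/X.
   A map X \<rightarrow> V/X is given by a representative map g : X \<rightarrow> V (the class of g x
   being g x + X); linearity, injectivity and surjectivity are stated modulo X. *)
definition iso_quot :: "('k::division_ring \<Rightarrow> 'v::ab_group_add \<Rightarrow> 'v) \<Rightarrow> 'v set \<Rightarrow> bool" where
  "iso_quot smul X \<longleftrightarrow> (\<exists>g::'v \<Rightarrow> 'v.
      (\<forall>x\<in>X. \<forall>y\<in>X. g (x + y) - (g x + g y) \<in> X) \<and>
      (\<forall>a. \<forall>x\<in>X. g (smul a x) - smul a (g x) \<in> X) \<and>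
      (\<forall>x\<in>X. g x \<in> X \<longrightarrow> x = 0) \<and>
      (\<forall>v. \<exists>x\<in>X. v - g x \<in> X))"

definition Gr :: "('k::division_ring \<Rightarrow> 'v::ab_group_add \<Rightarrow> 'v) \<Rightarrow> 'v set set" where
  "Gr smul = {X. subspace smul X \<and> iso_quot smul X}"

definition sum_sp :: "'v::ab_group_add set \<Rightarrow> 'v set \<Rightarrow> 'v set" where
  "sum_sp X Y = {x + y | x y. x \<in> X \<and> y \<in> Y}"

definition codim1 :: "('k::division_ring \<Rightarrow> 'v::ab_group_add \<Rightarrow> 'v) \<Rightarrow> 'v set \<Rightarrow> 'v set \<Rightarrow> bool" where
  "codim1 smul X Y \<longleftrightarrow> X \<subseteq> Y \<and> (\<exists>v\<in>Y. v \<notin> X \<and> Y = {x + smul a v | x a. x \<in> X})"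

definition adjacent :: "('k::division_ring \<Rightarrow> 'v::ab_group_add \<Rightarrow> 'v) \<Rightarrow> 'v set \<Rightarrow> 'v set \<Rightarrow> bool" where
  "adjacent smul X Y \<longleftrightarrow> codim1 smul X (sum_sp X Y) \<and> codim1 smul Y (sum_sp X Y)"

definition distant :: "'v::ab_group_add set \<Rightarrow> 'v set \<Rightarrow> bool" where
  "distant X Y \<longleftrightarrow> sum_sp X Y = UNIV \<and> X \<inter> Y = {0}"

definition is_point :: "('k::division_ring \<Rightarrow> 'v::ab_group_add \<Rightarrow> 'v) \<Rightarrow> 'v set \<Rightarrow> bool" where
  "is_point smul P \<longleftrightarrow> (\<exists>v. v \<noteq> 0 \<and> P = range (\<lambda>a. smul a v))"

end

theory Submission
  imports Defs
begin

text \<open>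
  Write \<open>W + E\<^sub>0 = E\<^sub>0 \<oplus> \<langle>v\<rangle>\<close> and split \<open>v = e + e\<^sub>0\<close> along \<open>V = E \<oplus> E\<^sub>0\<close>; then
  \<open>W + E\<^sub>0 = E\<^sub>0 \<oplus> \<langle>e\<rangle>\<close> with \<open>0 \<noteq> e \<in> E\<close>, and \<open>E \<inter> E\<^sub>0 = 0\<close> forces \<open>W \<inter> E \<subseteq> \<langle>e\<rangle>\<close>.
  If \<open>W \<inter> E\<close> were \<open>0\<close>, pick \<open>w \<in> W \<setminus> E\<^sub>0\<close>, \<open>w = f\<^sub>0 + a e\<close>: then \<open>f\<^sub>0 \<in> E\<^sub>0\<close> lies outside
  the hyperplane \<open>W\<close> of \<open>W + E\<^sub>0\<close> and inside \<open>W + E\<close>, so \<open>E\<^sub>0 \<subseteq> W + E\<close> and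
  \<open>V = E + E\<^sub>0 \<subseteq> W + E\<close>, i.e. \<open>W\<close> and \<open>E\<close> would be distant. Hence \<open>W \<inter> E = \<langle>e\<rangle>\<close>.
\<close>

locale left_vs =
  fixes smul :: "'k::division_ring \<Rightarrow> 'v::ab_group_add \<Rightarrow> 'v"
  assumes left_vector_space: "left_vector_space smul"
begin

lemma smul_add_right: "smul a (x + y) = smul a x + smul a y"
  and smul_add_left: "smul (a + b) x = smul a x + smul b x"
  and smul_smul: "smul a (smul b x) = smul (a * b) x"
  and smul_one [simp]: "smul 1 x = x"
  using left_vector_space unfolding left_vector_space_def by auto

lemma smul_zero_left [simp]: "smul 0 x = 0"
  using smul_add_left[of 0 0 x] by simp

lemma smul_zero_right [simp]: "smul a 0 = 0"
  using smul_add_right[of a 0 0] by simp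

lemma smul_minus_left: "smul (- a) x = - smul a x"
proof -
  have "smul a x + smul (- a) x = 0" using smul_add_left[of a "- a" x] by simp
  then show ?thesis by (rule minus_unique[symmetric])
qed

lemma smul_inverse_cancel: "c \<noteq> 0 \<Longrightarrow> smul (a * inverse c) (smul c x) = smul a x"
  by (simp add: smul_smul mult.assoc)

lemma subspace_zero: "subspace smul X \<Longrightarrow> 0 \<in> X"
  and subspace_add: "subspace smul X \<Longrightarrow> x \<in> X \<Longrightarrow> y \<in> X \<Longrightarrow> x + y \<in> X"
  and subspace_smul: "subspace smul X \<Longrightarrow> x \<in> X \<Longrightarrow> smul a x \<in> X"
  unfolding subspace_def by blast+

lemma subspace_minus: "subspace smul X \<Longrightarrow> x \<in> X \<Longrightarrow> - x \<in> X"
  using subspace_smul[of X x "- 1"] by (simp add: smul_minus_left)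

lemma subspace_diff: "subspace smul X \<Longrightarrow> x \<in> X \<Longrightarrow> y \<in> X \<Longrightarrow> x - y \<in> X"
  using subspace_add[of X x "- y"] subspace_minus by simp

lemma subspace_Int: "subspace smul X \<Longrightarrow> subspace smul Y \<Longrightarrow> subspace smul (X \<inter> Y)"
  unfolding subspace_def by blast

lemma sum_sp_left: "subspace smul Y \<Longrightarrow> x \<in> X \<Longrightarrow> x \<in> sum_sp X Y"
  unfolding sum_sp_def using subspace_zero by force

lemma sum_sp_right: "subspace smul X \<Longrightarrow> y \<in> Y \<Longrightarrow> y \<in> sum_sp X Y"
  unfolding sum_sp_def using subspace_zero by force

lemma sum_sp_least:
  "subspace smul Z \<Longrightarrow> X \<subseteq> Z \<Longrightarrow> Y \<subseteq> Z \<Longrightarrow> sum_sp X Y \<subseteq> Z"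
  unfolding sum_sp_def using subspace_add by blast

lemma sum_sp_subspace:
  assumes "subspace smul X" "subspace smul Y"
  shows "subspace smul (sum_sp X Y)"
  unfolding subspace_def
proof (intro conjI ballI allI)
  show "0 \<in> sum_sp X Y"
    using sum_sp_left[OF assms(2) subspace_zero[OF assms(1)]] .
next
  fix p q assume "p \<in> sum_sp X Y" "q \<in> sum_sp X Y"
  then obtain x y x' y' where "p = x + y" "q = x' + y'" "x \<in> X" "y \<in> Y" "x' \<in> X" "y' \<in> Y"
    unfolding sum_sp_def by blast
  then show "p + q \<in> sum_sp X Y"
    unfolding sum_sp_def using subspace_add[OF assms(1)] subspace_add[OF assms(2)]
    by (intro CollectI exI[of _ "x + x'"] exI[of _ "y + y'"]) (simp add: algebra_simps)
next
  fix a p assume "p \<in> sum_sp X Y"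
  then show "smul a p \<in> sum_sp X Y"
    unfolding sum_sp_def using subspace_smul[OF assms(1)] subspace_smul[OF assms(2)] smul_add_right
    by blast
qed

lemma line_subset_subspace:
  assumes "subspace smul P" "smul c e \<in> P" "smul c e \<noteq> 0"
  shows "range (\<lambda>a. smul a e) \<subseteq> P"
proof
  fix y assume "y \<in> range (\<lambda>a. smul a e)"
  then obtain a where "y = smul a e" by blast
  moreover have "c \<noteq> 0" using assms(3) by auto
  ultimately have "y = smul (a * inverse c) (smul c e)" by (simp add: smul_inverse_cancel)
  then show "y \<in> P" using subspace_smul[OF assms(1,2)] by simp
qed

lemma codim1_generated_by:
  assumes X: "subspace smul X" and "codim1 smul X Y" and "y \<in> Y" "y \<notin> X"
  shows "Y = {x + smul a y | x a. x \<in> X}"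
proof -
  obtain v where Y: "Y = {x + smul a v | x a. x \<in> X}"
    using assms(2) unfolding codim1_def by blast
  obtain x0 c where y: "x0 \<in> X" "y = x0 + smul c v"
    using assms(3) Y by blast
  have "c \<noteq> 0" using y assms(4) by auto
  have "x + smul b v \<in> {x + smul a y | x a. x \<in> X}" if "x \<in> X" for x b
  proof -
    have "smul b v = smul (b * inverse c) y - smul (b * inverse c) x0"
      using y(2) \<open>c \<noteq> 0\<close> by (simp add: smul_add_right smul_inverse_cancel)
    then have "x + smul b v = (x - smul (b * inverse c) x0) + smul (b * inverse c) y"
      by simp
    moreover have "x - smul (b * inverse c) x0 \<in> X"
      using that y(1) by (simp add: X subspace_diff subspace_smul)
    ultimately show ?thesis by blast
  qed
  moreover have "x + smul a y \<in> Y" if "x \<in> X" for x a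
  proof -
    have "x + smul a y = (x + smul a x0) + smul (a * c) v"
      using y(2) by (simp add: smul_add_right smul_smul add.assoc)
    then show ?thesis
      using that y(1) Y by (blast intro: subspace_add subspace_smul X)
  qed
  ultimately show ?thesis using Y by blast
qed

lemma codim1_generator_in_complement:
  assumes X: "subspace smul X" and "codim1 smul X Y" and "sum_sp E X = UNIV"
  obtains e where "e \<in> E" "e \<notin> X" "Y = {x + smul a e | x a. x \<in> X}"
proof -
  obtain v where v: "v \<notin> X" "Y = {x + smul a v | x a. x \<in> X}"
    using assms(2) unfolding codim1_def by blast
  obtain e x0 where e: "v = e + x0" "e \<in> E" "x0 \<in> X"
    using assms(3) unfolding sum_sp_def by blast
  have "e \<notin> X" using e v(1) subspace_add[OF X] by blast
  moreover have "e \<in> Y"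
    unfolding v(2) using e(1,3) subspace_minus[OF X]
    by (intro CollectI exI[of _ "- x0"] exI[of _ 1]) auto
  ultimately show ?thesis
    using that e(2) codim1_generated_by[OF X assms(2)] by blast
qed

lemma inter_subset_line:
  assumes "subspace smul E" "E \<inter> E0 = {0}" "e \<in> E"
    and "W \<subseteq> {f + smul a e | f a. f \<in> E0}"
  shows "W \<inter> E \<subseteq> range (\<lambda>a. smul a e)"
proof
  fix y assume y: "y \<in> W \<inter> E"
  then obtain f a where f: "f \<in> E0" "y = f + smul a e"
    using assms(4) by blast
  have "f = y - smul a e" using f(2) by simp
  then have "f \<in> E" using y assms(1,3) by (simp add: subspace_diff subspace_smul)
  then have "f = 0" using f(1) assms(2) by blast
  then show "y \<in> range (\<lambda>a. smul a e)" using f(2) by simp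
qed

lemma sum_sp_UNIV_if_inter_zero:
  assumes W: "subspace smul W" and E: "subspace smul E" and E0: "subspace smul E0"
    and hyp: "codim1 smul W (sum_sp W E0)"
    and WE0: "sum_sp W E0 = {f + smul a e | f a. f \<in> E0}" and "e \<in> E" "e \<notin> E0"
    and "sum_sp E E0 = UNIV" and "W \<inter> E = {0}"
  shows "sum_sp W E = UNIV"
proof -
  have WE: "subspace smul (sum_sp W E)" using sum_sp_subspace[OF W E] .
  have "e \<in> sum_sp W E0"
    unfolding WE0 using subspace_zero[OF E0] by (intro CollectI exI[of _ 0] exI[of _ 1]) simp
  then have "\<not> W \<subseteq> E0"
    using \<open>e \<notin> E0\<close> sum_sp_least[OF E0, of W E0] by blast
  then obtain w where w: "w \<in> W" "w \<notin> E0" by blast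
  then obtain f0 a where f0: "f0 \<in> E0" "w = f0 + smul a e"
    using WE0 sum_sp_left[OF E0, of w W] by blast
  have "f0 \<notin> W"
  proof
    assume "f0 \<in> W"
    then have "w - f0 \<in> W" using w(1) W by (simp add: subspace_diff)
    moreover have "w - f0 = smul a e" using f0(2) by simp
    ultimately have "smul a e \<in> W \<inter> E" using \<open>e \<in> E\<close> E by (simp add: subspace_smul)
    then show False using \<open>W \<inter> E = {0}\<close> f0 w(2) by auto
  qed
  have "f0 = w + - smul a e" using f0(2) by simp
  moreover have "- smul a e \<in> E" using \<open>e \<in> E\<close> E by (simp add: subspace_minus subspace_smul)
  ultimately have "f0 \<in> sum_sp W E" using w(1) unfolding sum_sp_def by blast
  have "E0 \<subseteq> sum_sp W E"
  proof
    fix y assume "y \<in> E0"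
    moreover have "sum_sp W E0 = {x + smul b f0 | x b. x \<in> W}"
      using codim1_generated_by[OF W hyp sum_sp_right[OF W f0(1)] \<open>f0 \<notin> W\<close>] .
    ultimately obtain x b where "x \<in> W" "y = x + smul b f0"
      using sum_sp_right[OF W, of y E0] by blast
    then show "y \<in> sum_sp W E"
      using sum_sp_left[OF E, of x W] subspace_smul[OF WE \<open>f0 \<in> sum_sp W E\<close>]
      by (simp add: subspace_add[OF WE])
  qed
  then have "sum_sp E E0 \<subseteq> sum_sp W E"
    using sum_sp_least[OF WE] sum_sp_right[OF W, of _ E] by blast
  then show ?thesis using \<open>sum_sp E E0 = UNIV\<close> by blast
qed

end

theorem lemma4p8:
  fixes smul :: "'k::division_ring \<Rightarrow> 'v::ab_group_add \<Rightarrow> 'v"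
    and W E0 E :: "'v set"
  assumes "left_vector_space smul"
    and "dim_gt_2 smul"
    and "W \<in> Gr smul" and "E0 \<in> Gr smul" and "E \<in> Gr smul"
    and "adjacent smul W E0"
    and "distant E E0"
    and "\<not> distant W E"
  shows "is_point smul (W \<inter> E)"
proof -
  interpret left_vs smul by unfold_locales fact
  have W: "subspace smul W" and E0: "subspace smul E0" and E: "subspace smul E"
    using assms(3-5) unfolding Gr_def by auto
  have hyp0: "codim1 smul E0 (sum_sp W E0)" and hyp: "codim1 smul W (sum_sp W E0)"
    using assms(6) unfolding adjacent_def by auto
  have EE0: "sum_sp E E0 = UNIV" "E \<inter> E0 = {0}" using assms(7) unfolding distant_def by auto
  obtain e where "e \<in> E" "e \<notin> E0" and WE0: "sum_sp W E0 = {f + smul a e | f a. f \<in> E0}"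
    using codim1_generator_in_complement[OF E0 hyp0 EE0(1)] by blast
  have "W \<subseteq> sum_sp W E0" using sum_sp_left[OF E0] by blast
  then have line: "W \<inter> E \<subseteq> range (\<lambda>a. smul a e)"
    using inter_subset_line[OF E EE0(2) \<open>e \<in> E\<close>] unfolding WE0 by blast
  have "W \<inter> E \<noteq> {0}"
    using sum_sp_UNIV_if_inter_zero[OF W E E0 hyp WE0 \<open>e \<in> E\<close> \<open>e \<notin> E0\<close> EE0(1)] assms(8)
    unfolding distant_def by blast
  then obtain z where "z \<in> W \<inter> E" "z \<noteq> 0"
    using subspace_zero[OF W] subspace_zero[OF E] by blast
  moreover obtain c where "z = smul c e" using line \<open>z \<in> W \<inter> E\<close> by blast
  ultimately have "range (\<lambda>a. smul a e) \<subseteq> W \<inter> E"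
    using line_subset_subspace[OF subspace_Int[OF W E], of c e] by simp
  with line have "W \<inter> E = range (\<lambda>a. smul a e)" by (rule equalityI)
  moreover have "e \<noteq> 0" using \<open>e \<notin> E0\<close> subspace_zero[OF E0] by auto
  ultimately show ?thesis unfolding is_point_def by blast
qed

end
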